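(* Let $U\subset\mathbb{C}^4$ be a domain and $\eta$ a holomorphic 2-form on $U$ with $\eta\not\equiv0$. Let $\nu=dz_1\wedge dz_2\wedge dz_3\wedge dz_4$ and let $X=\mathrm{rot}(\eta)$ be the holomorphic vector field defined by $d\eta=i_X\nu$. If $X\not\equiv 0$, then $\eta$ is integrable if and only if $i_X\eta=0$.
   Context: For a holomorphic $q$-form $\eta$ on an open set $U\subset\mathbb{C}^n$, $\mathrm{Sing}(\eta)=\{z\in U:\eta(z)=0\}$. The form $\eta$ is called integrable if every point $p\in U\setminus\mathrm{Sing}(\eta)$ has an open neighborhood $V$ on which there are holomorphic 1-forms $\omega_1,\dots,\omega_q$ with $\eta|_V=\omega_1\wedge\cdots\wedge\omega_q$ and $d\omega_j\wedge\eta=0$ on $V$ for $j=1,\dots,q$. *)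

theory Defs
  imports "HOL-Analysis.Analysis"
begin

text \<open>A form is given by its coefficient
  function: at a point z, the value at an index set I is the coefficient of
  dz_I = dz_{i1} wedge ... wedge dz_{iq}, where i1 < ... < iq enumerate I.\<close>

type_synonym 'n cform = "complex^'n \<Rightarrow> ('n set \<Rightarrow> complex)"
type_synonym 'n cvfield = "complex^'n \<Rightarrow> complex^'n"

definition holo_on :: "(complex^'n) set \<Rightarrow> (complex^'n \<Rightarrow> complex) \<Rightarrow> bool" where
  "holo_on U f \<longleftrightarrow> (\<forall>z\<in>U. \<exists>f'. (f has_derivative f') (at z) \<and>
                                  (\<forall>c v. f' (c *s v) = c * f' v))"

definition pderiv_c :: "'n::finite \<Rightarrow> (complex^'n \<Rightarrow> complex) \<Rightarrow> complex^'n \<Rightarrow> complex" where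
  "pderiv_c k f z = deriv (\<lambda>t. f (z + t *s axis k 1)) 0"

text \<open>Sign of the permutation sorting the concatenation of the increasing
  enumerations of I and J (I, J disjoint): dz_I wedge dz_J = sgn_pair I J * dz_(I union J).\<close>
definition sgn_pair :: "'n::linorder set \<Rightarrow> 'n set \<Rightarrow> complex" where
  "sgn_pair I J = (-1) ^ card {(i, j). i \<in> I \<and> j \<in> J \<and> j < i}"

definition holo_form :: "nat \<Rightarrow> (complex^'n::finite) set \<Rightarrow> 'n cform \<Rightarrow> bool" where
  "holo_form q U \<eta> \<longleftrightarrow> (\<forall>I. card I = q \<longrightarrow> holo_on U (\<lambda>z. \<eta> z I)) \<and>
                        (\<forall>I. card I \<noteq> q \<longrightarrow> (\<forall>z\<in>U. \<eta> z I = 0))"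

definition holo_field :: "(complex^'n::finite) set \<Rightarrow> 'n cvfield \<Rightarrow> bool" where
  "holo_field U X \<longleftrightarrow> (\<forall>k. holo_on U (\<lambda>z. X z $ k))"

definition wedge :: "'n::{finite,linorder} cform \<Rightarrow> 'n cform \<Rightarrow> 'n cform" where
  "wedge \<alpha> \<beta> = (\<lambda>z K. \<Sum>I\<in>Pow K. sgn_pair I (K - I) * \<alpha> z I * \<beta> z (K - I))"

definition wedge_list :: "'n::{finite,linorder} cform list \<Rightarrow> 'n cform" where
  "wedge_list ws = foldr wedge ws (\<lambda>z K. if K = {} then 1 else 0)"

definition ext_d :: "'n::{finite,linorder} cform \<Rightarrow> 'n cform" where
  "ext_d \<alpha> = (\<lambda>z K. \<Sum>k\<in>K. sgn_pair {k} (K - {k}) * pderiv_c k (\<lambda>w. \<alpha> w (K - {k})) z)"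

definition interior_prod :: "'n::{finite,linorder} cvfield \<Rightarrow> 'n cform \<Rightarrow> 'n cform" where
  "interior_prod X \<alpha> = (\<lambda>z J. \<Sum>k\<in>UNIV - J. sgn_pair {k} J * (X z $ k) * \<alpha> z (insert k J))"

definition vol_form :: "'n::{finite,linorder} cform" where
  "vol_form = (\<lambda>z K. if K = UNIV then 1 else 0)"

definition Sing :: "(complex^'n) set \<Rightarrow> 'n cform \<Rightarrow> (complex^'n) set" where
  "Sing U \<eta> = {z \<in> U. \<eta> z = (\<lambda>_. 0)}"

definition integrable_form :: "nat \<Rightarrow> (complex^'n::{finite,linorder}) set \<Rightarrow> 'n cform \<Rightarrow> bool" where
  "integrable_form q U \<eta> \<longleftrightarrow>
     (\<forall>p \<in> U - Sing U \<eta>. \<exists>V. open V \<and> p \<in> V \<and> V \<subseteq> U \<and>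
        (\<exists>ws. length ws = q \<and> (\<forall>\<omega>\<in>set ws. holo_form 1 V \<omega>) \<and>
              (\<forall>z\<in>V. \<eta> z = wedge_list ws z) \<and>
              (\<forall>\<omega>\<in>set ws. \<forall>z\<in>V. wedge (ext_d \<omega>) \<eta> z = (\<lambda>_. 0))))"

end

theory Submission
  imports Defs "HOL-Complex_Analysis.Complex_Analysis"
begin

text \<open>
  Near a point where \<open>\<eta> \<noteq> 0\<close>, integrability means \<open>\<eta> = a \<and> b\<close> with \<open>da \<and> \<eta> = db \<and> \<eta> = 0\<close>.
  Wedging \<open>d\<eta> = da \<and> b - a \<and> db = i\<^sub>X \<nu>\<close> with \<open>a\<close> and with \<open>b\<close> identifies the top
  coefficients of \<open>da \<and> \<eta>\<close> and \<open>db \<and> \<eta>\<close> with \<open>i\<^sub>X a\<close> and \<open>i\<^sub>X b\<close>. Since \<open>a\<close> and \<open>b\<close>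
  are independent, \<open>i\<^sub>X (a \<and> b) = (i\<^sub>X a) b - (i\<^sub>X b) a\<close> vanishes iff both contractions
  do. Hence, wherever \<open>\<eta> = a \<and> b\<close>, the integrability conditions are equivalent to
  \<open>i\<^sub>X \<eta> = 0\<close>.

  Conversely, \<open>i\<^sub>X \<eta> = 0\<close> gives \<open>i\<^sub>X (\<eta> \<and> \<eta>) = 2 (i\<^sub>X \<eta>) \<and> \<eta> = 0\<close>, so the holomorphic
  coefficient of \<open>\<eta> \<and> \<eta>\<close> vanishes where a component of \<open>X\<close> does not. The components
  of \<open>X\<close> are, up to sign, coefficients of \<open>d\<eta>\<close>, hence continuous; as \<open>X \<noteq> 0\<close> somewhere,
  this is a nonempty open set, and the identity theorem gives \<open>\<eta> \<and> \<eta> = 0\<close> on \<open>U\<close>.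
  Such an \<open>\<eta>\<close> is decomposable: \<open>(i\<^sub>w i\<^sub>v \<eta>) \<eta> = i\<^sub>v \<eta> \<and> i\<^sub>w \<eta>\<close>, with coordinate vectors
  \<open>v\<close>, \<open>w\<close> chosen so that \<open>i\<^sub>w i\<^sub>v \<eta> \<noteq> 0\<close> near the given point.
\<close>

section \<open>Holomorphic functions of several variables\<close>

lemma holo_on_subset: "holo_on U f \<Longrightarrow> V \<subseteq> U \<Longrightarrow> holo_on V f"
  unfolding holo_on_def by blast

lemma holo_on_continuous_on: "holo_on U f \<Longrightarrow> continuous_on U f"
  unfolding holo_on_def by (meson continuous_at_imp_continuous_on has_derivative_continuous)

lemma holo_on_const: "holo_on U (\<lambda>z. c)"
  unfolding holo_on_def by (auto intro!: exI[of _ "\<lambda>_. 0"])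

lemma holo_on_add:
  assumes "holo_on U f" "holo_on U g"
  shows "holo_on U (\<lambda>z. f z + g z)"
  unfolding holo_on_def
proof
  fix z assume "z \<in> U"
  then obtain f' g' where "(f has_derivative f') (at z)" "\<And>c v. f' (c *s v) = c * f' v"
    "(g has_derivative g') (at z)" "\<And>c v. g' (c *s v) = c * g' v"
    using assms unfolding holo_on_def by metis
  then show "\<exists>h'. ((\<lambda>z. f z + g z) has_derivative h') (at z) \<and> (\<forall>c v. h' (c *s v) = c * h' v)"
    by (intro exI[of _ "\<lambda>h. f' h + g' h"]) (auto intro: has_derivative_add simp: algebra_simps)
qed

lemma holo_on_mult:
  assumes "holo_on U f" "holo_on U g"
  shows "holo_on U (\<lambda>z. f z * g z)"
  unfolding holo_on_def
proof
  fix z assume "z \<in> U"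
  then obtain f' g' where "(f has_derivative f') (at z)" "\<And>c v. f' (c *s v) = c * f' v"
    "(g has_derivative g') (at z)" "\<And>c v. g' (c *s v) = c * g' v"
    using assms unfolding holo_on_def by metis
  then show "\<exists>h'. ((\<lambda>z. f z * g z) has_derivative h') (at z) \<and> (\<forall>c v. h' (c *s v) = c * h' v)"
    by (intro exI[of _ "\<lambda>h. f z * g' h + f' h * g z"]) (auto intro: has_derivative_mult simp: algebra_simps)
qed

lemma holo_on_inverse:
  assumes "holo_on U f" "\<And>z. z \<in> U \<Longrightarrow> f z \<noteq> 0"
  shows "holo_on U (\<lambda>z. inverse (f z))"
  unfolding holo_on_def
proof
  fix z assume "z \<in> U"
  then obtain f' where f': "(f has_derivative f') (at z)" "\<And>c v. f' (c *s v) = c * f' v" and "f z \<noteq> 0"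
    using assms unfolding holo_on_def by metis
  then have "((\<lambda>z. inverse (f z)) has_derivative (\<lambda>h. - (inverse (f z) * f' h * inverse (f z)))) (at z)"
    using has_derivative_compose[OF f'(1) has_derivative_inverse'] by simp
  then show "\<exists>h'. ((\<lambda>z. inverse (f z)) has_derivative h') (at z) \<and> (\<forall>c v. h' (c *s v) = c * h' v)"
    using f'(2) by (intro exI[of _ "\<lambda>h. - (inverse (f z) * f' h * inverse (f z))"]) (auto simp: algebra_simps)
qed

lemma holo_on_divide:
  "holo_on U f \<Longrightarrow> holo_on U g \<Longrightarrow> (\<And>z. z \<in> U \<Longrightarrow> g z \<noteq> 0) \<Longrightarrow> holo_on U (\<lambda>z. f z / g z)"
  unfolding divide_inverse by (intro holo_on_mult holo_on_inverse)

lemma holo_on_sum: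
  "finite S \<Longrightarrow> (\<And>i. i \<in> S \<Longrightarrow> holo_on U (f i)) \<Longrightarrow> holo_on U (\<lambda>z. \<Sum>i\<in>S. f i z)"
  by (induction S rule: finite_induct) (auto intro: holo_on_const holo_on_add)

lemma holo_on_cong:
  assumes "open U" "\<And>z. z \<in> U \<Longrightarrow> f z = g z" "holo_on U f"
  shows "holo_on U g"
  unfolding holo_on_def
proof
  fix z assume z: "z \<in> U"
  then obtain f' where f': "(f has_derivative f') (at z)" "\<forall>c v. f' (c *s v) = c * f' v"
    using assms(3) unfolding holo_on_def by blast
  have "(g has_derivative f') (at z)"
    using has_derivative_transform_within_open[OF f'(1) assms(1) z] assms(2) by auto
  with f'(2) show "\<exists>f'. (g has_derivative f') (at z) \<and> (\<forall>c v. f' (c *s v) = c * f' v)"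
    by blast
qed

lemma norm_scalar_mult_vec: "norm ((t::complex) *s (u::complex^'n::finite)) = norm t * norm u"
  by (simp add: norm_vec_def norm_mult L2_set_right_distrib)

lemma norm_axis_complex: "norm (axis k (t::complex)) = norm t"
proof -
  have "(\<Sum>i\<in>UNIV. (norm (vec_nth (axis k t) i))\<^sup>2) = (\<Sum>i\<in>UNIV. if i = k then (norm t)\<^sup>2 else 0)"
    by (rule sum.cong) (auto simp: axis_def)
  then show ?thesis
    by (simp add: norm_vec_def L2_set_def)
qed

lemma bounded_linear_scalar_mult_vec: "bounded_linear (\<lambda>h::complex. h *s (u::complex^'n::finite))"
  by (auto simp: linear_conv_bounded_linear[symmetric] vec_eq_iff algebra_simps intro!: linearI)

lemma holo_on_has_field_derivative_line:
  assumes "holo_on U f" "a + t0 *s u \<in> U"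
  obtains D where "((\<lambda>t. f (a + t *s u)) has_field_derivative D) (at t0)"
proof -
  obtain f' where f': "(f has_derivative f') (at (a + t0 *s u))" and lin: "\<And>c v. f' (c *s v) = c * f' v"
    using assms unfolding holo_on_def by blast
  have "((\<lambda>t. a + t *s u) has_derivative (\<lambda>h. h *s u)) (at t0)"
    using has_derivative_add[OF has_derivative_const
        bounded_linear.has_derivative[OF bounded_linear_scalar_mult_vec has_derivative_ident]]
    by fastforce
  from has_derivative_compose[OF this f']
  have "((\<lambda>t. f (a + t *s u)) has_derivative (\<lambda>h. f' u * h)) (at t0)"
    by (simp add: lin mult.commute)
  then show ?thesis
    using that unfolding has_field_derivative_def by blast
qed

lemma holo_on_holomorphic_on_line:
  assumes "holo_on U f"
  shows "(\<lambda>t. f (a + t *s u)) holomorphic_on {t. a + t *s u \<in> U}"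
  unfolding holomorphic_on_def
  by (metis assms field_differentiable_at_within field_differentiable_def holo_on_has_field_derivative_line mem_Collect_eq)

lemma holo_on_field_differentiable_line:
  assumes "holo_on U f" "z \<in> U"
  shows "(\<lambda>t. f (z + t *s u)) field_differentiable (at 0)"
  using assms holo_on_has_field_derivative_line[OF assms(1), of z 0 u] field_differentiable_def
  by auto

lemma pderiv_c_cong:
  assumes "open V" "z \<in> V" "\<And>w. w \<in> V \<Longrightarrow> f w = g w"
  shows "pderiv_c k f z = pderiv_c k g z"
  unfolding pderiv_c_def
proof (rule deriv_cong_ev)
  obtain e where e: "e > 0" "ball z e \<subseteq> V"
    using assms open_contains_ball by blast
  have "z + t *s axis k 1 \<in> V" if "dist t 0 < e" for t :: complex
    using that e by (auto simp: dist_norm norm_scalar_mult_vec norm_axis_complex)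
  then show "\<forall>\<^sub>F t in nhds 0. f (z + t *s axis k 1) = g (z + t *s axis k 1)"
    unfolding eventually_nhds_metric using e(1) assms(3) by blast
qed simp

lemma holo_on_eq_zero_convex:
  assumes hol: "holo_on S g" and S: "open S" "convex S"
    and a: "a \<in> S" "e > 0" "\<forall>w\<in>ball a e. g w = 0" and y: "y \<in> S"
  shows "g y = 0"
proof -
  define line where "line t = a + t *s (y - a)" for t
  have cont: "continuous (at t) line" for t
    unfolding line_def
    by (intro continuous_intros linear_continuous_at bounded_linear_scalar_mult_vec)
  have "open (ball a e \<inter> S)" "a \<in> ball a e \<inter> S"
    using S(1) a by auto
  then obtain e' where e': "e' > 0" "ball a e' \<subseteq> ball a e \<inter> S"
    using open_contains_ball by blast
  have "line -` S = (\<lambda>t. t *s (y - a)) -` ((+) (- a) ` S)"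
    unfolding line_def vimage_def image_def
    by (auto simp: algebra_simps)
  moreover have "convex ((\<lambda>t. t *s (y - a)) -` ((+) (- a) ` S))"
    by (intro convex_linear_vimage convex_translation S(2) bounded_linear.linear bounded_linear_scalar_mult_vec)
  ultimately have "convex (line -` S)"
    by simp
  then have conn: "connected (line -` S)"
    by (rule convex_connected)
  have opens: "open (line -` S)" "open (line -` ball a e')"
    using S(1) by (auto intro!: continuous_open_vimage cont)
  have sub: "line -` ball a e' \<subseteq> line -` S" and "0 \<in> line -` ball a e'" "1 \<in> line -` S"
    using e' y by (auto simp: line_def)
  have holl: "(g \<circ> line) holomorphic_on line -` S"
    unfolding line_def o_def vimage_def by (rule holo_on_holomorphic_on_line[OF hol])
  have "(g \<circ> line) 1 = (\<lambda>_. 0) 1"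
  proof (rule analytic_continuation_open[OF opens(2) opens(1) _ conn sub holl])
    show "line -` ball a e' \<noteq> {}"
      using \<open>0 \<in> line -` ball a e'\<close> by blast
    show "(\<lambda>_. 0) holomorphic_on line -` S"
      by simp
    show "(g \<circ> line) t = 0" if "t \<in> line -` ball a e'" for t
      using that e' a(3) by auto
  qed fact
  then show ?thesis
    by (simp add: line_def)
qed

theorem holo_on_eq_zero_connected:
  assumes hol: "holo_on U g" and U: "open U" "connected U"
    and W: "open W" "W \<noteq> {}" "W \<subseteq> U" "\<forall>w\<in>W. g w = 0" and z: "z \<in> U"
  shows "g z = 0"
proof -
  define near_zero where "near_zero x \<longleftrightarrow> (\<exists>e>0. \<forall>w\<in>ball x e. g w = 0)" for x
  obtain w0 where w0: "w0 \<in> W"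
    using W(2) by blast
  then obtain e0 where e0: "e0 > 0" "ball w0 e0 \<subseteq> W"
    using W(1) open_contains_ball by blast
  have "near_zero z"
  proof (rule connected_induction_simple[OF U(2), of w0 z near_zero])
    show "w0 \<in> U" "z \<in> U"
      using w0 W(3) z by auto
    show "near_zero w0"
      using e0 W(4) unfolding near_zero_def by blast
  next
    fix c assume "c \<in> U"
    then obtain R where R: "R > 0" "ball c R \<subseteq> U"
      using U(1) open_contains_ball by blast
    have propagate: "near_zero y" if x: "x \<in> ball c R" and y: "y \<in> ball c R" and "near_zero x" for x y
    proof -
      obtain e where e: "e > 0" "\<forall>w\<in>ball x e. g w = 0"
        using \<open>near_zero x\<close> unfolding near_zero_def by blast
      have "\<forall>w\<in>ball c R. g w = 0"
        using holo_on_eq_zero_convex[OF holo_on_subset[OF hol R(2)] open_ball convex_ball x e] by blast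
      moreover have "ball y (R - dist c y) \<subseteq> ball c R"
      proof
        fix w assume "w \<in> ball y (R - dist c y)"
        then show "w \<in> ball c R"
          using dist_triangle[of c w y] by simp
      qed
      ultimately show ?thesis
        using y unfolding near_zero_def by (intro exI[of _ "R - dist c y"]) auto
    qed
    show "\<exists>T. openin (top_of_set U) T \<and> c \<in> T \<and> (\<forall>x\<in>T. \<forall>y\<in>T. near_zero x \<longrightarrow> near_zero y)"
    proof (intro exI conjI)
      show "openin (top_of_set U) (ball c R)"
        using R(2) by (simp add: open_subset)
      show "c \<in> ball c R"
        using R(1) by simp
      show "\<forall>x\<in>ball c R. \<forall>y\<in>ball c R. near_zero x \<longrightarrow> near_zero y"
        using propagate by blast
    qed
  qed
  then obtain e where "e > 0" "\<forall>w\<in>ball z e. g w = 0"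
    unfolding near_zero_def by blast
  then show ?thesis
    by simp
qed

lemma pderiv_c_has_contour_integral:
  assumes hol: "holo_on U f" and r: "r > 0" "cball z r \<subseteq> U"
  shows "((\<lambda>t. f (z + t *s axis k 1) / t\<^sup>2) has_contour_integral (2 * pi * \<i> * pderiv_c k f z)) (circlepath 0 r)"
proof -
  have sub: "cball 0 r \<subseteq> {t. z + t *s axis k 1 \<in> U}"
    using r(2) by (auto simp: dist_norm norm_scalar_mult_vec norm_axis_complex)
  have holl: "(\<lambda>t. f (z + t *s axis k 1)) holomorphic_on {t. z + t *s axis k 1 \<in> U}"
    by (rule holo_on_holomorphic_on_line[OF hol])
  have "((\<lambda>t. f (z + t *s axis k 1) / (t - 0) ^ Suc 1) has_contour_integral
      (2 * pi * \<i> / fact 1 * (deriv ^^ 1) (\<lambda>t. f (z + t *s axis k 1)) 0)) (circlepath 0 r)"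
  proof (rule Cauchy_has_contour_integral_higher_derivative_circlepath)
    show "continuous_on (cball 0 r) (\<lambda>t. f (z + t *s axis k 1))"
      using holomorphic_on_imp_continuous_on[OF holl] sub continuous_on_subset by blast
    show "(\<lambda>t. f (z + t *s axis k 1)) holomorphic_on ball 0 r"
      using holomorphic_on_subset[OF holl] sub ball_subset_cball by blast
  qed (use r in auto)
  then show ?thesis
    by (simp add: pderiv_c_def power2_eq_square)
qed

lemma norm_pderiv_c_diff_le:
  assumes hol: "holo_on U f" and r: "r > 0" "cball z r \<subseteq> U" "cball z' r \<subseteq> U"
    and bound: "\<And>t. norm t = r \<Longrightarrow> norm (f (z + t *s axis k 1) - f (z' + t *s axis k 1)) \<le> B"
  shows "norm (pderiv_c k f z - pderiv_c k f z') \<le> B / r"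
proof -
  have "norm (f (z + of_real r *s axis k 1) - f (z' + of_real r *s axis k 1)) \<le> B"
    using r(1) by (intro bound) simp
  then have "B \<ge> 0"
    by (rule order_trans[OF norm_ge_zero])
  have "norm (f (z + t *s axis k 1) / t\<^sup>2 - f (z' + t *s axis k 1) / t\<^sup>2) \<le> B / r\<^sup>2"
    if t: "norm (t - 0) = r" for t
  proof -
    have "norm (f (z + t *s axis k 1) / t\<^sup>2 - f (z' + t *s axis k 1) / t\<^sup>2)
        = norm (f (z + t *s axis k 1) - f (z' + t *s axis k 1)) / r\<^sup>2"
      using t by (simp add: diff_divide_distrib[symmetric] norm_divide norm_power)
    also have "\<dots> \<le> B / r\<^sup>2"
      using t by (intro divide_right_mono bound) auto
    finally show ?thesis .
  qed
  then have "norm (2 * pi * \<i> * pderiv_c k f z - 2 * pi * \<i> * pderiv_c k f z') \<le> B / r\<^sup>2 * (2 * pi * r)"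
    using \<open>B \<ge> 0\<close> r(1)
    by (intro has_contour_integral_bound_circlepath[OF has_contour_integral_diff[OF
          pderiv_c_has_contour_integral[OF hol r(1,2)] pderiv_c_has_contour_integral[OF hol r(1,3)]]])
       auto
  also have "B / r\<^sup>2 * (2 * pi * r) = 2 * pi * (B / r)"
    using r(1) by (simp add: power2_eq_square)
  finally have "2 * pi * norm (pderiv_c k f z - pderiv_c k f z') \<le> 2 * pi * (B / r)"
    by (simp add: right_diff_distrib[symmetric] norm_mult)
  then show ?thesis
    by (rule mult_left_le_imp_le) (simp add: pi_gt_zero)
qed

lemma norm_pderiv_c_diff_le_oscillation:
  assumes hol: "holo_on U f" and r: "r > 0" "cball z0 (2 * r) \<subseteq> U" and z: "dist z z0 < r"
    and osc: "\<And>x x'. x \<in> cball z0 (2 * r) \<Longrightarrow> x' \<in> cball z0 (2 * r) \<Longrightarrow> dist x' x = dist z z0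
      \<Longrightarrow> norm (f x' - f x) \<le> B"
  shows "norm (pderiv_c k f z - pderiv_c k f z0) \<le> B / r"
proof (rule norm_pderiv_c_diff_le[OF hol r(1)])
  have balls: "cball z r \<subseteq> cball z0 (2 * r)" "cball z0 r \<subseteq> cball z0 (2 * r)"
    using z r(1) by (simp_all add: cball_subset_cball_iff)
  then show "cball z r \<subseteq> U" "cball z0 r \<subseteq> U"
    using r(2) by auto
  fix t :: complex
  assume "norm t = r"
  then have "z0 + t *s axis k 1 \<in> cball z0 r" "z + t *s axis k 1 \<in> cball z r"
    by (simp_all add: dist_norm norm_scalar_mult_vec norm_axis_complex)
  then have "z0 + t *s axis k 1 \<in> cball z0 (2 * r)" "z + t *s axis k 1 \<in> cball z0 (2 * r)"
    using balls by blast+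
  moreover have "dist (z + t *s axis k 1) (z0 + t *s axis k 1) = dist z z0"
    by (simp add: dist_norm)
  ultimately show "norm (f (z + t *s axis k 1) - f (z0 + t *s axis k 1)) \<le> B"
    by (rule osc)
qed

lemma continuous_on_pderiv_c:
  assumes hol: "holo_on U f" and U: "open U"
  shows "continuous_on U (pderiv_c k f)"
  unfolding continuous_on_eq_continuous_at[OF U] continuous_at_eps_delta
proof (intro ballI allI impI)
  fix z0 and e :: real
  assume "z0 \<in> U" "e > 0"
  then obtain e0 where e0: "e0 > 0" "cball z0 e0 \<subseteq> U"
    using U open_contains_cball by blast
  define r where "r = e0 / 2"
  have r: "r > 0" "cball z0 (2 * r) \<subseteq> U"
    using e0 by (simp_all add: r_def)
  have "uniformly_continuous_on (cball z0 (2 * r)) f"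
    by (rule compact_uniformly_continuous[OF holo_on_continuous_on[OF holo_on_subset[OF hol r(2)]] compact_cball])
  moreover have "e * r / 2 > 0"
    using \<open>e > 0\<close> r(1) by simp
  ultimately obtain d where d: "d > 0"
    "\<And>x x'. x \<in> cball z0 (2 * r) \<Longrightarrow> x' \<in> cball z0 (2 * r) \<Longrightarrow> dist x' x < d
      \<Longrightarrow> dist (f x') (f x) < e * r / 2"
    unfolding uniformly_continuous_on_def by metis
  show "\<exists>\<delta>>0. \<forall>z. dist z z0 < \<delta> \<longrightarrow> dist (pderiv_c k f z) (pderiv_c k f z0) < e"
  proof (intro exI[of _ "min r d"] conjI allI impI)
    show "min r d > 0"
      using r(1) d(1) by simp
    fix z assume z: "dist z z0 < min r d"
    then have "norm (pderiv_c k f z - pderiv_c k f z0) \<le> e * r / 2 / r"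
      using d(2) by (intro norm_pderiv_c_diff_le_oscillation[OF hol r]) (auto simp: dist_norm less_imp_le)
    then show "dist (pderiv_c k f z) (pderiv_c k f z0) < e"
      using r(1) \<open>e > 0\<close> by (simp add: dist_norm)
  qed
qed

section \<open>Exterior algebra at a point\<close>

text \<open>Values of forms at a single point, as coefficient functions on index sets. \<open>d_pt D\<close> is the
  exterior derivative assembled from the partial derivatives \<open>D k\<close> of the coefficients.\<close>

definition wedge_pt ::
    "('n::{finite,linorder} set \<Rightarrow> complex) \<Rightarrow> ('n set \<Rightarrow> complex) \<Rightarrow> 'n set \<Rightarrow> complex"
  where "wedge_pt F G K = (\<Sum>I\<in>Pow K. sgn_pair I (K - I) * F I * G (K - I))"

definition interior_pt :: "complex^'n::{finite,linorder} \<Rightarrow> ('n set \<Rightarrow> complex) \<Rightarrow> 'n set \<Rightarrow> complex"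
  where "interior_pt x F J = (\<Sum>k\<in>UNIV - J. sgn_pair {k} J * vec_nth x k * F (insert k J))"

definition d_pt :: "('n::{finite,linorder} \<Rightarrow> 'n set \<Rightarrow> complex) \<Rightarrow> 'n set \<Rightarrow> complex"
  where "d_pt D K = (\<Sum>k\<in>K. sgn_pair {k} (K - {k}) * D k (K - {k}))"

definition homogeneous :: "nat \<Rightarrow> ('n set \<Rightarrow> complex) \<Rightarrow> bool"
  where "homogeneous q F \<longleftrightarrow> (\<forall>I. card I \<noteq> q \<longrightarrow> F I = 0)"

lemma homogeneousD: "homogeneous q F \<Longrightarrow> card I \<noteq> q \<Longrightarrow> F I = 0"
  by (simp add: homogeneous_def)

lemma wedge_eq_wedge_pt: "wedge \<alpha> \<beta> z = wedge_pt (\<alpha> z) (\<beta> z)"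
  by (simp add: wedge_def wedge_pt_def fun_eq_iff)

lemma interior_prod_eq_interior_pt: "interior_prod X \<alpha> z = interior_pt (X z) (\<alpha> z)"
  by (simp add: interior_prod_def interior_pt_def fun_eq_iff)

lemma ext_d_eq_d_pt: "ext_d \<alpha> z = d_pt (\<lambda>k I. pderiv_c k (\<lambda>w. \<alpha> w I) z)"
  by (simp add: ext_d_def d_pt_def fun_eq_iff)

lemma sgn_pair_nonzero: "sgn_pair I J \<noteq> 0"
  by (simp add: sgn_pair_def)

lemma sgn_pair_square: "sgn_pair I J * sgn_pair I J = 1"
  by (simp add: sgn_pair_def flip: power_mult_distrib)

lemma sgn_pair_eq_prod:
  fixes I J :: "'a::{finite,linorder} set"
  shows "sgn_pair I J = (\<Prod>i\<in>I. \<Prod>j\<in>J. if j < i then -1 else 1)"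
proof -
  have "(\<Prod>i\<in>I. \<Prod>j\<in>J. if j < i then -1 else (1::complex))
      = (\<Prod>p\<in>I \<times> J. (-1) ^ (if snd p < fst p then 1 else 0))"
    by (simp add: prod.cartesian_product case_prod_beta) (rule prod.cong; simp)
  also have "\<dots> = (-1) ^ (\<Sum>p\<in>I \<times> J. if snd p < fst p then 1 else 0)"
    by (simp add: power_sum)
  also have "(\<Sum>p\<in>I \<times> J. if snd p < fst p then 1 else 0) = card {p \<in> I \<times> J. snd p < fst p}"
    by (simp add: sum.If_cases Int_def conj_commute)
  also have "{p \<in> I \<times> J. snd p < fst p} = {(i, j). i \<in> I \<and> j \<in> J \<and> j < i}"
    by auto
  finally show ?thesis
    by (simp add: sgn_pair_def)
qed

lemma homogeneous_wedge_pt: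
  fixes F G :: "'n::{finite,linorder} set \<Rightarrow> complex"
  assumes "homogeneous p F" "homogeneous q G"
  shows "homogeneous (p + q) (wedge_pt F G)"
  unfolding homogeneous_def
proof (intro allI impI)
  fix K :: "'n set"
  assume K: "card K \<noteq> p + q"
  have "F I * G (K - I) = 0" if "I \<subseteq> K" for I
    using that K assms card_Diff_subset[of I K] card_mono[of K I]
    by (cases "card I = p") (auto simp: homogeneous_def)
  then show "wedge_pt F G K = 0"
    by (auto simp: wedge_pt_def mult.assoc intro!: sum.neutral)
qed

lemma homogeneous_interior_pt:
  assumes "homogeneous (Suc q) F"
  shows "homogeneous q (interior_pt x F)"
  using assms by (auto simp: homogeneous_def interior_pt_def card_insert_if intro!: sum.neutral)

lemma homogeneous_d_pt:
  fixes D :: "'n::{finite,linorder} \<Rightarrow> 'n set \<Rightarrow> complex"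
  assumes "\<And>k. homogeneous q (D k)"
  shows "homogeneous (Suc q) (d_pt D)"
  unfolding homogeneous_def d_pt_def
proof (intro allI impI sum.neutral ballI)
  fix K :: "'n set" and k
  assume "card K \<noteq> Suc q" "k \<in> K"
  then have "card (K - {k}) \<noteq> q"
    using card_Suc_Diff1[of K k] by auto
  then show "sgn_pair {k} (K - {k}) * D k (K - {k}) = 0"
    using assms by (simp add: homogeneous_def)
qed

lemma interior_pt_axis:
  "interior_pt (axis i 1) F J = (if i \<in> J then 0 else sgn_pair {i} J * F (insert i J))"
proof -
  have "interior_pt (axis i 1) F J = (\<Sum>k\<in>UNIV - J. if k = i then sgn_pair {k} J * F (insert k J) else 0)"
    unfolding interior_pt_def by (rule sum.cong) (auto simp: axis_def)
  then show ?thesis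
    by (simp add: sum.delta)
qed

lemma interior_pt_axis_axis:
  "i \<noteq> j \<Longrightarrow> interior_pt (axis j 1) (interior_pt (axis i 1) F) {} = sgn_pair {i} {j} * F {i, j}"
  by (simp add: interior_pt_axis sgn_pair_def)

lemma interior_pt_top_minus:
  "interior_pt x F (UNIV - {k}) = sgn_pair {k} (UNIV - {k}) * vec_nth x k * F UNIV"
proof -
  have "UNIV - (UNIV - {k}) = {k}" "insert k (UNIV - {k}) = UNIV"
    by auto
  then show ?thesis
    by (simp add: interior_pt_def)
qed

lemma sum_Pow_insert:
  assumes "a \<notin> A" "finite A"
  shows "sum f (Pow (insert a A)) = sum f (Pow A) + sum (\<lambda>I. f (insert a I)) (Pow A)"
proof -
  have "Pow A \<inter> insert a ` Pow A = {}" "inj_on (insert a) (Pow A)"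
    using assms by (auto simp: inj_on_def)
  then show ?thesis
    using assms by (simp add: Pow_insert sum.union_disjoint sum.reindex)
qed

text \<open>In dimension 4 the identities below are checked by expanding the coefficient sums over
  the 16 subsets of \<open>{0, 1, 2, 3}\<close>.\<close>

lemma less_4 [simp]:
  "(0::4) < 1" "(1::4) < 2" "(2::4) < 3" "(0::4) < 2" "(0::4) < 3" "(1::4) < 3"
  by (simp_all add: less_bit0_def bit0.Rep_numeral bit0.Rep_0 bit0.Rep_1)

lemma not_less_4 [simp]:
  "\<not> (1::4) < 0" "\<not> (2::4) < 0" "\<not> (3::4) < 0" "\<not> (2::4) < 1" "\<not> (3::4) < 1" "\<not> (3::4) < 2"
  using less_4 by (meson less_asym)+

lemma UNIV_4_from_0: "(UNIV :: 4 set) = {0, 1, 2, 3}"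
proof -
  have "(4::4) = 0"
    by (simp add: bit0.Rep_inject_sym bit0.Rep_numeral bit0.Rep_0)
  then show ?thesis
    using UNIV_4 by auto
qed

lemma subset_4_cases:
  assumes "P {}" "P {0}" "P {1}" "P {2}" "P {3}" "P {0,1}" "P {0,2}" "P {0,3}" "P {1,2}" "P {1,3}"
    "P {2,3}" "P {0,1,2}" "P {0,1,3}" "P {0,2,3}" "P {1,2,3}" "P {0,1,2,3}"
  shows "P (K::4 set)"
proof -
  have "K = (if 0 \<in> K then {0} else {}) \<union> (if 1 \<in> K then {1} else {})
      \<union> (if 2 \<in> K then {2} else {}) \<union> (if 3 \<in> K then {3} else {})" (is "K = ?K")
  proof (rule set_eqI)
    fix x :: 4
    have "x \<in> {0, 1, 2, 3}"
      by (simp flip: UNIV_4_from_0)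
    then show "x \<in> K \<longleftrightarrow> x \<in> ?K"
      by auto
  qed
  then show ?thesis
    using assms by (cases "0 \<in> K"; cases "1 \<in> K"; cases "2 \<in> K"; cases "3 \<in> K") (simp_all add: insert_commute)
qed

lemma interior_pt_4:
  "interior_pt x (F::4 set \<Rightarrow> complex) J = (\<Sum>k\<in>{0,1,2,3} - J. sgn_pair {k} J * vec_nth x k * F (insert k J))"
  unfolding interior_pt_def UNIV_4_from_0 ..

lemma vol_form_4: "vol_form z (K::4 set) = (if card K = 4 then 1 else 0)"
  using card_subset_eq[of "UNIV::4 set" K] by (auto simp: vol_form_def)

lemmas expand_4 = sum_Pow_insert insert_Diff_if sgn_pair_eq_prod insert_commute
  wedge_pt_def d_pt_def interior_pt_4 vol_form_4

lemma interior_pt_wedge_pt_1: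
  assumes "homogeneous 1 (a::4 set \<Rightarrow> complex)" "homogeneous 1 b"
  shows "interior_pt x (wedge_pt a b) J = interior_pt x a {} * b J - interior_pt x b {} * a J"
  by (induct J rule: subset_4_cases)
     (simp_all add: homogeneousD[OF assms(1)] homogeneousD[OF assms(2)] expand_4 algebra_simps)

lemma wedge_pt_self_1:
  assumes "homogeneous 1 (a::4 set \<Rightarrow> complex)"
  shows "wedge_pt a a K = 0"
  by (induct K rule: subset_4_cases) (simp_all add: homogeneousD[OF assms] expand_4 algebra_simps)

lemma interior_pt_wedge_pt_self_2:
  assumes "homogeneous 2 (E::4 set \<Rightarrow> complex)"
  shows "interior_pt x (wedge_pt E E) J = 2 * wedge_pt (interior_pt x E) E J"
  by (induct J rule: subset_4_cases) (simp_all add: homogeneousD[OF assms] expand_4 algebra_simps)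

lemma decomposable_if_wedge_pt_self_zero:
  assumes "homogeneous 2 (E::4 set \<Rightarrow> complex)" "wedge_pt E E UNIV = 0"
  shows "interior_pt w (interior_pt v E) {} * E K = wedge_pt (interior_pt v E) (interior_pt w E) K"
  using assms(2) unfolding UNIV_4_from_0
  by (induct K rule: subset_4_cases) (simp_all add: homogeneousD[OF assms(1)] expand_4; algebra)+

lemma eq_wedge_pt_if_wedge_pt_self_zero:
  assumes "homogeneous 2 (E::4 set \<Rightarrow> complex)" "wedge_pt E E UNIV = 0"
    and c: "c = interior_pt w (interior_pt v E) {}" "c \<noteq> 0"
  shows "E = wedge_pt (\<lambda>K. interior_pt v E K / c) (interior_pt w E)"
proof
  fix K
  have "wedge_pt (\<lambda>K. interior_pt v E K / c) (interior_pt w E) K = wedge_pt (interior_pt v E) (interior_pt w E) K / c"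
    by (simp add: wedge_pt_def sum_divide_distrib)
  also have "\<dots> = E K"
  proof -
    have "c * E K = wedge_pt (interior_pt v E) (interior_pt w E) K"
      using c(1) decomposable_if_wedge_pt_self_zero[OF assms(1,2)] by simp
    then show ?thesis
      using c(2) by (simp flip: \<open>c * E K = _\<close>)
  qed
  finally show "E K = wedge_pt (\<lambda>K. interior_pt v E K / c) (interior_pt w E) K"
    by simp
qed

lemma d_pt_wedge_pt_Leibniz:
  assumes "homogeneous 1 (a::4 set \<Rightarrow> complex)" "homogeneous 1 b"
    and "\<And>k. homogeneous 1 (Da k)" "\<And>k. homogeneous 1 (Db k)"
  shows "d_pt (\<lambda>k J. wedge_pt (Da k) b J + wedge_pt a (Db k) J) K
    = wedge_pt (d_pt Da) b K - wedge_pt a (d_pt Db) K"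
  using homogeneousD[OF assms(1)] homogeneousD[OF assms(2)] homogeneousD[OF assms(3)] homogeneousD[OF assms(4)]
  by (induct K rule: subset_4_cases) (simp_all add: expand_4 algebra_simps)

text \<open>Here \<open>G\<close>, \<open>D\<close> stand for \<open>da\<close>, \<open>db\<close>, and the hypothesis is the Leibniz expansion of
  \<open>d(a \<and> b) = i\<^sub>x \<nu>\<close>.\<close>

lemma top_wedge_pt_eq_interior_pt:
  fixes G D a b :: "4 set \<Rightarrow> complex"
  assumes "homogeneous 2 G" "homogeneous 2 D" "homogeneous 1 a" "homogeneous 1 b"
    and "\<And>K. wedge_pt G b K - wedge_pt a D K = interior_pt x (vol_form z) K"
  shows "wedge_pt G (wedge_pt a b) UNIV = interior_pt x a {}"
    and "wedge_pt D (wedge_pt a b) UNIV = interior_pt x b {}"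
proof -
  note hom = homogeneousD[OF assms(1)] homogeneousD[OF assms(2)] homogeneousD[OF assms(3)] homogeneousD[OF assms(4)]
  have "interior_pt x a {} = - wedge_pt (\<lambda>K. wedge_pt G b K - wedge_pt a D K) a {0,1,2,3}"
    unfolding assms(5) by (simp add: hom expand_4 algebra_simps)
  also have "\<dots> = wedge_pt G (wedge_pt a b) {0,1,2,3}"
    by (simp add: hom expand_4 algebra_simps)
  finally show "wedge_pt G (wedge_pt a b) UNIV = interior_pt x a {}"
    by (simp add: UNIV_4_from_0)
  have "interior_pt x b {} = - wedge_pt (\<lambda>K. wedge_pt G b K - wedge_pt a D K) b {0,1,2,3}"
    unfolding assms(5) by (simp add: hom expand_4 algebra_simps)
  also have "\<dots> = wedge_pt D (wedge_pt a b) {0,1,2,3}"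
    by (simp add: hom expand_4 algebra_simps)
  finally show "wedge_pt D (wedge_pt a b) UNIV = interior_pt x b {}"
    by (simp add: UNIV_4_from_0)
qed

lemma interior_pt_wedge_pt_eq_zero_iff:
  assumes a: "homogeneous 1 (a::4 set \<Rightarrow> complex)" and b: "homogeneous 1 b"
    and nonzero: "wedge_pt a b \<noteq> (\<lambda>_. 0)"
  shows "interior_pt x (wedge_pt a b) = (\<lambda>_. 0) \<longleftrightarrow> interior_pt x a {} = 0 \<and> interior_pt x b {} = 0"
proof
  assume "interior_pt x (wedge_pt a b) = (\<lambda>_. 0)"
  then have lin: "interior_pt x a {} * b J = interior_pt x b {} * a J" for J
    using interior_pt_wedge_pt_1[OF a b, of x J] by (simp add: fun_eq_iff)
  have xa: "interior_pt x a {} = 0"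
  proof (rule ccontr)
    assume "interior_pt x a {} \<noteq> 0"
    then have "b J = interior_pt x b {} / interior_pt x a {} * a J" for J
      using lin[of J] by (simp add: field_simps)
    then have "wedge_pt a b K = interior_pt x b {} / interior_pt x a {} * wedge_pt a a K" for K
      by (simp add: wedge_pt_def sum_distrib_left algebra_simps)
    then show False
      using nonzero wedge_pt_self_1[OF a] by (simp add: fun_eq_iff)
  qed
  moreover have "interior_pt x b {} = 0"
  proof (rule ccontr)
    assume "interior_pt x b {} \<noteq> 0"
    then have "a = (\<lambda>_. 0)"
      using lin xa by (simp add: fun_eq_iff)
    then show False
      using nonzero by (simp add: wedge_pt_def fun_eq_iff)
  qed
  ultimately show "interior_pt x a {} = 0 \<and> interior_pt x b {} = 0" ..
next
  assume "interior_pt x a {} = 0 \<and> interior_pt x b {} = 0"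
  then show "interior_pt x (wedge_pt a b) = (\<lambda>_. 0)"
    by (simp add: interior_pt_wedge_pt_1[OF a b] fun_eq_iff)
qed

section \<open>Holomorphic forms\<close>

lemma holo_on_coeff_holo_form:
  assumes "holo_form q V \<alpha>" "open V"
  shows "holo_on V (\<lambda>w. \<alpha> w I)"
proof (cases "card I = q")
  case True
  then show ?thesis
    using assms(1) by (simp add: holo_form_def)
next
  case False
  then show ?thesis
    using assms by (intro holo_on_cong[OF assms(2) _ holo_on_const[of V 0]]) (auto simp: holo_form_def)
qed

lemma homogeneous_holo_form: "holo_form q U \<eta> \<Longrightarrow> z \<in> U \<Longrightarrow> homogeneous q (\<eta> z)"
  by (simp add: holo_form_def homogeneous_def)

lemma homogeneous_pderiv_holo_form:
  fixes \<alpha> :: "'n::finite cform"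
  assumes "holo_form q V \<alpha>" "open V" "z \<in> V"
  shows "homogeneous q (\<lambda>I. pderiv_c k (\<lambda>w. \<alpha> w I) z)"
  unfolding homogeneous_def
proof (intro allI impI)
  fix I :: "'n set"
  assume "card I \<noteq> q"
  then have "pderiv_c k (\<lambda>w. \<alpha> w I) z = pderiv_c k (\<lambda>w. 0) z"
    using assms by (intro pderiv_c_cong) (auto simp: holo_form_def)
  then show "pderiv_c k (\<lambda>w. \<alpha> w I) z = 0"
    by (simp add: pderiv_c_def)
qed

lemma homogeneous_ext_d:
  "holo_form q V \<alpha> \<Longrightarrow> open V \<Longrightarrow> z \<in> V \<Longrightarrow> homogeneous (Suc q) (ext_d \<alpha> z)"
  unfolding ext_d_eq_d_pt by (intro homogeneous_d_pt homogeneous_pderiv_holo_form)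

lemma homogeneous_top_eq_zero_iff:
  fixes F :: "'n::finite set \<Rightarrow> complex"
  assumes "homogeneous CARD('n) F"
  shows "F = (\<lambda>_. 0) \<longleftrightarrow> F UNIV = 0"
proof -
  have "K = UNIV" if "card K = CARD('n)" for K :: "'n set"
    using that card_subset_eq[of UNIV K] by auto
  then show ?thesis
    using assms by (auto simp: homogeneous_def fun_eq_iff)
qed

lemma pderiv_c_wedge_pt:
  assumes \<alpha>: "\<And>I. (\<lambda>t. \<alpha> (z + t *s axis k 1) I) field_differentiable (at 0)"
    and \<beta>: "\<And>I. (\<lambda>t. \<beta> (z + t *s axis k 1) I) field_differentiable (at 0)"
  shows "pderiv_c k (\<lambda>w. wedge_pt (\<alpha> w) (\<beta> w) K) z =
    wedge_pt (\<lambda>I. pderiv_c k (\<lambda>w. \<alpha> w I) z) (\<beta> z) K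
    + wedge_pt (\<alpha> z) (\<lambda>I. pderiv_c k (\<lambda>w. \<beta> w I) z) K"
proof -
  let ?\<alpha> = "\<lambda>I t. \<alpha> (z + t *s axis k 1) I" and ?\<beta> = "\<lambda>I t. \<beta> (z + t *s axis k 1) I"
  have summand: "deriv (\<lambda>t. sgn_pair I (K - I) * ?\<alpha> I t * ?\<beta> (K - I) t) 0
      = sgn_pair I (K - I) * (pderiv_c k (\<lambda>w. \<alpha> w I) z * \<beta> z (K - I)
        + \<alpha> z I * pderiv_c k (\<lambda>w. \<beta> w (K - I)) z)" for I
    using deriv_cmult[OF field_differentiable_mult[OF \<alpha> \<beta>], of "sgn_pair I (K - I)" I "K - I"]
      deriv_mult[OF \<alpha> \<beta>, of I "K - I"]
    by (simp add: pderiv_c_def mult.assoc algebra_simps)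
  have "pderiv_c k (\<lambda>w. wedge_pt (\<alpha> w) (\<beta> w) K) z
      = (\<Sum>I\<in>Pow K. deriv (\<lambda>t. sgn_pair I (K - I) * ?\<alpha> I t * ?\<beta> (K - I) t) 0)"
    unfolding pderiv_c_def wedge_pt_def
    by (rule deriv_sum) (intro field_differentiable_mult field_differentiable_const \<alpha> \<beta>)
  also have "\<dots> = (\<Sum>I\<in>Pow K. sgn_pair I (K - I) * (pderiv_c k (\<lambda>w. \<alpha> w I) z * \<beta> z (K - I)
        + \<alpha> z I * pderiv_c k (\<lambda>w. \<beta> w (K - I)) z))"
    by (simp only: summand)
  finally show ?thesis
    by (simp add: wedge_pt_def sum.distrib[symmetric] algebra_simps)
qed

lemma ext_d_wedge_1forms:
  fixes a b :: "4 cform"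
  assumes a: "holo_form 1 V a" and b: "holo_form 1 V b" and V: "open V" "z \<in> V"
    and \<eta>: "\<forall>w\<in>V. \<eta> w = wedge a b w"
  shows "ext_d \<eta> z K = wedge_pt (ext_d a z) (b z) K - wedge_pt (a z) (ext_d b z) K"
proof -
  have "ext_d \<eta> z = d_pt (\<lambda>k I. pderiv_c k (\<lambda>w. wedge_pt (a w) (b w) I) z)"
    unfolding ext_d_eq_d_pt using V \<eta>
    by (intro arg_cong[where f=d_pt] ext pderiv_c_cong) (auto simp: wedge_eq_wedge_pt)
  also have "\<dots> = d_pt (\<lambda>k J. wedge_pt (\<lambda>I. pderiv_c k (\<lambda>w. a w I) z) (b z) J
      + wedge_pt (a z) (\<lambda>I. pderiv_c k (\<lambda>w. b w I) z) J)"
    using holo_on_field_differentiable_line[OF holo_on_coeff_holo_form[OF a V(1)] V(2)]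
      holo_on_field_differentiable_line[OF holo_on_coeff_holo_form[OF b V(1)] V(2)]
    by (intro arg_cong[where f=d_pt] ext pderiv_c_wedge_pt)
  finally have d\<eta>: "ext_d \<eta> z = \<dots>" .
  show ?thesis
    unfolding d\<eta> ext_d_eq_d_pt[of a] ext_d_eq_d_pt[of b]
    using a b V by (intro d_pt_wedge_pt_Leibniz homogeneous_holo_form homogeneous_pderiv_holo_form)
qed

lemma integrability_conditions_iff_interior_zero:
  fixes a b :: "4 cform"
  assumes a: "holo_form 1 V a" and b: "holo_form 1 V b" and V: "open V" "z \<in> V"
    and \<eta>: "\<forall>w\<in>V. \<eta> w = wedge a b w" "\<eta> z \<noteq> (\<lambda>_. 0)"
    and rot: "ext_d \<eta> z = interior_prod X vol_form z"
  shows "wedge (ext_d a) \<eta> z = (\<lambda>_. 0) \<and> wedge (ext_d b) \<eta> z = (\<lambda>_. 0)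
    \<longleftrightarrow> interior_prod X \<eta> z = (\<lambda>_. 0)"
proof -
  have "homogeneous (Suc 1) (ext_d a z)" "homogeneous (Suc 1) (ext_d b z)"
    using a b V by (simp_all add: homogeneous_ext_d)
  then have hom: "homogeneous 1 (a z)" "homogeneous 1 (b z)" "homogeneous 2 (ext_d a z)" "homogeneous 2 (ext_d b z)"
    using a b V by (simp_all add: homogeneous_holo_form numeral_2_eq_2)
  have \<eta>z: "\<eta> z = wedge_pt (a z) (b z)"
    using \<eta> V by (simp add: wedge_eq_wedge_pt)
  have top: "wedge_pt (ext_d a z) (\<eta> z) UNIV = interior_pt (X z) (a z) {}"
    "wedge_pt (ext_d b z) (\<eta> z) UNIV = interior_pt (X z) (b z) {}"
  proof -
    have "wedge_pt (ext_d a z) (b z) K - wedge_pt (a z) (ext_d b z) K = interior_pt (X z) (vol_form z) K" for K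
      using ext_d_wedge_1forms[OF a b V \<eta>(1), of K] rot by (simp add: interior_prod_eq_interior_pt)
    from top_wedge_pt_eq_interior_pt[OF hom(3,4,1,2) this]
    show "wedge_pt (ext_d a z) (\<eta> z) UNIV = interior_pt (X z) (a z) {}"
      "wedge_pt (ext_d b z) (\<eta> z) UNIV = interior_pt (X z) (b z) {}"
      by (simp_all add: \<eta>z)
  qed
  have "homogeneous CARD(4) (wedge_pt (ext_d \<omega> z) (\<eta> z))" if "homogeneous 2 (ext_d \<omega> z)" for \<omega> :: "4 cform"
    using homogeneous_wedge_pt[OF that homogeneous_wedge_pt[OF hom(1,2)]] by (simp add: \<eta>z)
  then have "wedge (ext_d \<omega>) \<eta> z = (\<lambda>_. 0) \<longleftrightarrow> wedge_pt (ext_d \<omega> z) (\<eta> z) UNIV = 0"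
    if "homogeneous 2 (ext_d \<omega> z)" for \<omega> :: "4 cform"
    using that by (simp add: wedge_eq_wedge_pt homogeneous_top_eq_zero_iff)
  then show ?thesis
    using interior_pt_wedge_pt_eq_zero_iff[OF hom(1,2), of "X z"] \<eta>(2) hom(3,4) top
    by (simp add: interior_prod_eq_interior_pt \<eta>z)
qed

lemma wedge_list_pair: "wedge_list [a, b] = wedge a b"
proof -
  have "wedge b (\<lambda>z K. if K = {} then 1 else 0) z K = b z K" for z K
  proof -
    have "wedge b (\<lambda>z K. if K = {} then 1 else 0) z K = (\<Sum>I\<in>Pow K. if I = K then sgn_pair I (K - I) * b z I else 0)"
      unfolding wedge_def by (rule sum.cong) auto
    also have "\<dots> = b z K"
      by (simp add: sum.delta sgn_pair_def)
    finally show ?thesis .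
  qed
  then have "wedge b (\<lambda>z K. if K = {} then 1 else 0) = b"
    by blast
  then show ?thesis
    by (simp add: wedge_list_def)
qed

lemma integrable_form_2_iff:
  fixes \<eta> :: "'n::{finite,linorder} cform"
  shows "integrable_form 2 U \<eta> \<longleftrightarrow> (\<forall>p\<in>U - Sing U \<eta>. \<exists>V a b. open V \<and> p \<in> V \<and> V \<subseteq> U \<and>
      holo_form 1 V a \<and> holo_form 1 V b \<and> (\<forall>z\<in>V. \<eta> z = wedge a b z) \<and>
      (\<forall>z\<in>V. wedge (ext_d a) \<eta> z = (\<lambda>_. 0) \<and> wedge (ext_d b) \<eta> z = (\<lambda>_. 0)))"
proof -
  have pairs: "(\<exists>ws. length ws = 2 \<and> P ws) \<longleftrightarrow> (\<exists>a b. P [a, b])" for P :: "'n cform list \<Rightarrow> bool"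
    by (auto simp: numeral_2_eq_2 length_Suc_conv)
  show ?thesis
    unfolding integrable_form_def pairs
    by (simp add: wedge_list_pair ball_conj_distrib conj_ac)
qed

lemma rot_component:
  assumes "ext_d \<eta> z = interior_prod X vol_form z"
  shows "vec_nth (X z) k = sgn_pair {k} (UNIV - {k}) * ext_d \<eta> z (UNIV - {k})"
proof -
  have "ext_d \<eta> z (UNIV - {k}) = sgn_pair {k} (UNIV - {k}) * vec_nth (X z) k"
    using assms by (simp add: interior_prod_eq_interior_pt interior_pt_top_minus vol_form_def)
  then show ?thesis
    by (simp add: mult.assoc[symmetric] sgn_pair_square)
qed

lemma continuous_on_rot_component:
  assumes \<eta>: "holo_form q U \<eta>" and U: "open U"
    and rot: "\<forall>z\<in>U. ext_d \<eta> z = interior_prod X vol_form z"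
  shows "continuous_on U (\<lambda>z. vec_nth (X z) k)"
proof -
  have "continuous_on U (\<lambda>z. sgn_pair {k} (UNIV - {k}) * ext_d \<eta> z (UNIV - {k}))"
    unfolding ext_d_def
    by (intro continuous_intros continuous_on_pderiv_c holo_on_coeff_holo_form[OF \<eta> U] U)
  then show ?thesis
    by (rule continuous_on_eq) (metis rot rot_component)
qed

lemma holo_on_interior_pt:
  "(\<And>K. holo_on U (\<lambda>z. F z K)) \<Longrightarrow> holo_on U (\<lambda>z. interior_pt x (F z) J)"
  unfolding interior_pt_def by (intro holo_on_sum holo_on_mult holo_on_const) auto

lemma holo_on_wedge_pt:
  "(\<And>K. holo_on U (\<lambda>z. F z K)) \<Longrightarrow> (\<And>K. holo_on U (\<lambda>z. G z K))
    \<Longrightarrow> holo_on U (\<lambda>z. wedge_pt (F z) (G z) J)"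
  unfolding wedge_pt_def by (intro holo_on_sum holo_on_mult holo_on_const) auto

lemma holo_form_subset:
  assumes "holo_form q U \<alpha>" "V \<subseteq> U"
  shows "holo_form q V \<alpha>"
  using assms holo_on_subset[of U _ V] unfolding holo_form_def by blast

lemma holo_form_divide:
  "holo_form q U \<alpha> \<Longrightarrow> holo_on U c \<Longrightarrow> (\<And>z. z \<in> U \<Longrightarrow> c z \<noteq> 0) \<Longrightarrow> holo_form q U (\<lambda>z K. \<alpha> z K / c z)"
  unfolding holo_form_def by (auto intro!: holo_on_divide)

lemma holo_form_interior_pt:
  fixes \<eta> :: "'n::{finite,linorder} cform"
  assumes "holo_form (Suc q) U \<eta>" "open U"
  shows "holo_form q U (\<lambda>z. interior_pt u (\<eta> z))"
  unfolding holo_form_def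
  using homogeneous_interior_pt[OF homogeneous_holo_form[OF assms(1)]]
  by (auto simp: homogeneous_def intro!: holo_on_interior_pt holo_on_coeff_holo_form[OF assms])

lemma wedge_self_zero_if_interior_rot_zero:
  fixes \<eta> :: "4 cform"
  assumes U: "open U" "connected U" and \<eta>: "holo_form 2 U \<eta>"
    and rot: "\<forall>z\<in>U. ext_d \<eta> z = interior_prod X vol_form z" and "\<exists>z\<in>U. X z \<noteq> 0"
    and iX: "\<forall>z\<in>U. interior_prod X \<eta> z = (\<lambda>_. 0)"
  shows "\<forall>z\<in>U. wedge \<eta> \<eta> z = (\<lambda>_. 0)"
proof -
  define top where "top z = wedge_pt (\<eta> z) (\<eta> z) UNIV" for z
  have rot_top: "vec_nth (X z) k * top z = 0" if z: "z \<in> U" for z k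
  proof -
    have "interior_pt (X z) (wedge_pt (\<eta> z) (\<eta> z)) (UNIV - {k}) = 0"
      using interior_pt_wedge_pt_self_2[OF homogeneous_holo_form[OF \<eta> z]] iX z
      by (simp add: interior_prod_eq_interior_pt wedge_pt_def)
    then show ?thesis
      by (simp add: top_def interior_pt_top_minus sgn_pair_nonzero)
  qed
  obtain z0 k where z0: "z0 \<in> U" "vec_nth (X z0) k \<noteq> 0"
    using assms(5) by (metis vec_eq_iff zero_index)
  define W where "W = U \<inter> (\<lambda>z. vec_nth (X z) k) -` (- {0})"
  have "open W"
    unfolding W_def
    by (intro continuous_open_preimage continuous_on_rot_component[OF \<eta> U(1) rot] U(1) open_Compl) simp
  moreover have "holo_on U top"
    unfolding top_def by (intro holo_on_wedge_pt holo_on_coeff_holo_form[OF \<eta> U(1)])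
  ultimately have "top z = 0" if "z \<in> U" for z
    using z0 rot_top that by (intro holo_on_eq_zero_connected[of U top W]) (auto simp: W_def U)
  moreover have "homogeneous CARD(4) (wedge_pt (\<eta> z) (\<eta> z))" if "z \<in> U" for z
    using homogeneous_wedge_pt[OF homogeneous_holo_form[OF \<eta> that] homogeneous_holo_form[OF \<eta> that]] by simp
  ultimately show ?thesis
    by (simp add: wedge_eq_wedge_pt homogeneous_top_eq_zero_iff top_def)
qed

lemma local_decomposition:
  fixes \<eta> :: "4 cform"
  assumes U: "open U" and \<eta>: "holo_form 2 U \<eta>" and self: "\<forall>z\<in>U. wedge \<eta> \<eta> z = (\<lambda>_. 0)"
    and p: "p \<in> U" "\<eta> p \<noteq> (\<lambda>_. 0)"
  obtains V a b where "open V" "p \<in> V" "V \<subseteq> U" "holo_form 1 V a" "holo_form 1 V b"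
    "\<forall>z\<in>V. \<eta> z = wedge a b z \<and> \<eta> z \<noteq> (\<lambda>_. 0)"
proof -
  obtain I where I: "\<eta> p I \<noteq> 0"
    using p(2) by auto
  then have "card I = 2"
    using \<eta> p(1) by (auto simp: holo_form_def)
  then obtain i j where ij: "I = {i, j}" "i \<noteq> j"
    by (auto simp: card_2_iff)
  define v where "v = axis i (1::complex)"
  define w where "w = axis j (1::complex)"
  define c where "c z = interior_pt w (interior_pt v (\<eta> z)) {}" for z
  define V where "V = U \<inter> c -` (- {0})"
  define a where "a z = (\<lambda>K. interior_pt v (\<eta> z) K / c z)" for z
  define b where "b z = interior_pt w (\<eta> z)" for z
  have \<iota>: "holo_form 1 U (\<lambda>z. interior_pt u (\<eta> z))" for u
    using holo_form_interior_pt[of 1] \<eta> U by (simp add: numeral_2_eq_2)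
  have "holo_on U c"
    unfolding c_def by (intro holo_on_interior_pt holo_on_coeff_holo_form[OF \<iota> U])
  then have "open V"
    unfolding V_def using U by (intro continuous_open_preimage holo_on_continuous_on open_Compl closed_singleton)
  moreover have "p \<in> V"
    using p(1) I ij by (simp add: V_def c_def v_def w_def interior_pt_axis_axis sgn_pair_nonzero)
  moreover have "V \<subseteq> U" "\<And>z. z \<in> V \<Longrightarrow> c z \<noteq> 0"
    by (simp_all add: V_def)
  moreover from this have "holo_form 1 V a" "holo_form 1 V b"
    unfolding a_def b_def
    by (intro holo_form_divide holo_form_subset[OF \<iota>] holo_on_subset[OF \<open>holo_on U c\<close>]; simp)+
  moreover have "\<eta> z = wedge a b z \<and> \<eta> z \<noteq> (\<lambda>_. 0)" if z: "z \<in> V" for z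
  proof
    have "z \<in> U" "c z \<noteq> 0"
      using z by (simp_all add: V_def)
    then show "\<eta> z = wedge a b z"
      using self eq_wedge_pt_if_wedge_pt_self_zero[OF homogeneous_holo_form[OF \<eta>]]
      by (simp add: wedge_eq_wedge_pt a_def b_def c_def)
    show "\<eta> z \<noteq> (\<lambda>_. 0)"
      using \<open>c z \<noteq> 0\<close> by (auto simp: c_def interior_pt_def)
  qed
  ultimately show ?thesis
    using that by blast
qed

lemma interior_rot_zero_if_integrable:
  fixes \<eta> :: "4 cform"
  assumes "integrable_form 2 U \<eta>" and rot: "\<forall>z\<in>U. ext_d \<eta> z = interior_prod X vol_form z"
  shows "\<forall>z\<in>U. interior_prod X \<eta> z = (\<lambda>_. 0)"
proof
  fix z assume z: "z \<in> U"
  show "interior_prod X \<eta> z = (\<lambda>_. 0)"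
  proof (cases "\<eta> z = (\<lambda>_. 0)")
    case True
    then show ?thesis
      by (simp add: interior_prod_def)
  next
    case False
    with z have "z \<in> U - Sing U \<eta>"
      by (simp add: Sing_def)
    with assms(1) obtain V a b where V: "open V" "z \<in> V" "V \<subseteq> U"
      "holo_form 1 V a" "holo_form 1 V b" "\<forall>w\<in>V. \<eta> w = wedge a b w"
      "\<forall>w\<in>V. wedge (ext_d a) \<eta> w = (\<lambda>_. 0) \<and> wedge (ext_d b) \<eta> w = (\<lambda>_. 0)"
      unfolding integrable_form_2_iff by meson
    then show ?thesis
      using integrability_conditions_iff_interior_zero[OF V(4,5,1,2,6) False] rot z by simp
  qed
qed

lemma integrable_if_interior_rot_zero:
  fixes \<eta> :: "4 cform"
  assumes U: "open U" "connected U" and \<eta>: "holo_form 2 U \<eta>"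
    and rot: "\<forall>z\<in>U. ext_d \<eta> z = interior_prod X vol_form z" and "\<exists>z\<in>U. X z \<noteq> 0"
    and iX: "\<forall>z\<in>U. interior_prod X \<eta> z = (\<lambda>_. 0)"
  shows "integrable_form 2 U \<eta>"
  unfolding integrable_form_2_iff
proof
  fix p assume "p \<in> U - Sing U \<eta>"
  then have "p \<in> U" "\<eta> p \<noteq> (\<lambda>_. 0)"
    by (auto simp: Sing_def)
  with local_decomposition[OF U(1) \<eta> wedge_self_zero_if_interior_rot_zero[OF assms]]
  obtain V a b where V: "open V" "p \<in> V" "V \<subseteq> U" "holo_form 1 V a" "holo_form 1 V b"
    "\<forall>z\<in>V. \<eta> z = wedge a b z \<and> \<eta> z \<noteq> (\<lambda>_. 0)"
    by blast
  have "wedge (ext_d a) \<eta> z = (\<lambda>_. 0) \<and> wedge (ext_d b) \<eta> z = (\<lambda>_. 0)" if z: "z \<in> V" for z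
  proof -
    have "z \<in> U" "\<eta> z \<noteq> (\<lambda>_. 0)" "\<forall>w\<in>V. \<eta> w = wedge a b w"
      using V(3,6) z by auto
    then show ?thesis
      using integrability_conditions_iff_interior_zero[OF V(4,5,1) z] rot iX by simp
  qed
  with V show "\<exists>V a b. open V \<and> p \<in> V \<and> V \<subseteq> U \<and> holo_form 1 V a \<and> holo_form 1 V b \<and>
      (\<forall>z\<in>V. \<eta> z = wedge a b z) \<and>
      (\<forall>z\<in>V. wedge (ext_d a) \<eta> z = (\<lambda>_. 0) \<and> wedge (ext_d b) \<eta> z = (\<lambda>_. 0))"
    by blast
qed

theorem proposition2:
  fixes U :: "(complex^4) set" and \<eta> :: "4 cform" and X :: "4 cvfield"
  assumes "open U" and "connected U" and "U \<noteq> {}"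
    and "holo_form 2 U \<eta>"
    and "\<exists>z\<in>U. \<eta> z \<noteq> (\<lambda>_. 0)"
    and "\<forall>z\<in>U. ext_d \<eta> z = interior_prod X vol_form z"
    and "\<exists>z\<in>U. X z \<noteq> 0"
  shows "integrable_form 2 U \<eta> \<longleftrightarrow> (\<forall>z\<in>U. interior_prod X \<eta> z = (\<lambda>_. 0))"
  using interior_rot_zero_if_integrable[OF _ assms(6)]
    integrable_if_interior_rot_zero[OF assms(1,2,4,6,7)]
  by blast

end
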